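(* Let $n\ge 1$, $k\ge 2$, $\mathcal{K}$ a set of size $k$, $\epsilon\ge 0$ and $p=e^\epsilon/(k-1+e^\epsilon)$. Then $\mathbf{N}\mathbf{S}\equiv\mathbf{N}\mathbf{S}^r$.
   Context: A dataset is $x\in\mathcal{K}^n$; its histogram $h(x)$ is the map $\kappa\mapsto|\{i:x_i=\kappa\}|$; $\mathcal{Z}$ is the set of histograms and $\#z$ the number of datasets with histogram $z$. Channels are row-stochastic matrices, and cascading is matrix multiplication. The full $k$-RR channel $\mathbf{N}:\mathcal{K}^n\to\mathcal{K}^n$ has $\mathbf{N}_{x,y}=\prod_{i=0}^{n-1}q(y_i\mid x_i)$ with $q(b\mid a)=p$ if $b=a$ and $(1-p)/(k-1)$ otherwise. The shuffle channel $\mathbf{S}:\mathcal{K}^n\to\mathcal{K}^n$ has $\mathbf{S}_{x,y}=1/\#h(x)$ if $h(y)=h(x)$, else $0$. The reduced shuffle channel $\mathbf{S}^r:\mathcal{K}^n\to\mathcal{Z}$ has $\mathbf{S}^r_{x,z}=1$ if $h(x)=z$, else $0$. For a prior $\pi$ and gain function $g:\mathcal{W}\times\mathcal{X}\to[0,\infty)$ ($\mathcal{W}$ finite nonempty), $V_g[\pi\triangleright\mathbf{C}]=\sum_{y}\max_{w}\sum_{x}\pi_x\mathbf{C}_{x,y}g(w,x)$. Channels with the same input set are equivalent ($\equiv$) iff they have equal posterior vulnerability for all priors and all such gain functions. *)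

theory Defs
  imports Complex_Main
begin

definition datasets :: "'a set \<Rightarrow> nat \<Rightarrow> 'a list set" where
  "datasets K n = {x. length x = n \<and> set x \<subseteq> K}"

definition hist :: "'a list \<Rightarrow> 'a \<Rightarrow> nat" where
  "hist x = (\<lambda>\<kappa>. card {i. i < length x \<and> x ! i = \<kappa>})"

definition hists :: "'a set \<Rightarrow> nat \<Rightarrow> ('a \<Rightarrow> nat) set" where
  "hists K n = hist ` datasets K n"

definition num_hist :: "'a set \<Rightarrow> nat \<Rightarrow> ('a \<Rightarrow> nat) \<Rightarrow> nat" where
  "num_hist K n z = card {y \<in> datasets K n. hist y = z}"

text \<open>Channels are real matrices given as functions of (input, output); cascading is
  matrix multiplication, summing over the intermediate set Y.\<close>
definition cascade :: "'y set \<Rightarrow> ('x \<Rightarrow> 'y \<Rightarrow> real) \<Rightarrow> ('y \<Rightarrow> 'z \<Rightarrow> real) \<Rightarrow> 'x \<Rightarrow> 'z \<Rightarrow> real" where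
  "cascade Y C D = (\<lambda>x z. \<Sum>y\<in>Y. C x y * D y z)"

definition krr_q :: "nat \<Rightarrow> real \<Rightarrow> 'a \<Rightarrow> 'a \<Rightarrow> real" where
  "krr_q k p b a = (if b = a then p else (1 - p) / (real k - 1))"

definition krr_full :: "nat \<Rightarrow> nat \<Rightarrow> real \<Rightarrow> 'a list \<Rightarrow> 'a list \<Rightarrow> real" where
  "krr_full n k p = (\<lambda>x y. \<Prod>i<n. krr_q k p (y ! i) (x ! i))"

definition shuffle_ch :: "'a set \<Rightarrow> nat \<Rightarrow> 'a list \<Rightarrow> 'a list \<Rightarrow> real" where
  "shuffle_ch K n = (\<lambda>x y. if hist y = hist x then 1 / real (num_hist K n (hist x)) else 0)"

definition rshuffle_ch :: "'a list \<Rightarrow> ('a \<Rightarrow> nat) \<Rightarrow> real" where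
  "rshuffle_ch = (\<lambda>x z. if hist x = z then 1 else 0)"

definition is_prior :: "'x set \<Rightarrow> ('x \<Rightarrow> real) \<Rightarrow> bool" where
  "is_prior X \<pi> \<longleftrightarrow> (\<forall>x\<in>X. 0 \<le> \<pi> x) \<and> (\<Sum>x\<in>X. \<pi> x) = 1"

text \<open>Gain functions g : W x X -> [0,inf) with W finite nonempty.  The action set W
  is taken as a subset of nat (every finite set is in bijection with one).\<close>
definition is_gain :: "nat set \<Rightarrow> 'x set \<Rightarrow> (nat \<Rightarrow> 'x \<Rightarrow> real) \<Rightarrow> bool" where
  "is_gain W X g \<longleftrightarrow> finite W \<and> W \<noteq> {} \<and> (\<forall>w\<in>W. \<forall>x\<in>X. 0 \<le> g w x)"

definition post_vuln :: "nat set \<Rightarrow> (nat \<Rightarrow> 'x \<Rightarrow> real) \<Rightarrow> 'x set \<Rightarrow> ('x \<Rightarrow> real)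
    \<Rightarrow> 'y set \<Rightarrow> ('x \<Rightarrow> 'y \<Rightarrow> real) \<Rightarrow> real" where
  "post_vuln W g X \<pi> Y C = (\<Sum>y\<in>Y. Max ((\<lambda>w. \<Sum>x\<in>X. \<pi> x * C x y * g w x) ` W))"

definition ch_equiv :: "'x set \<Rightarrow> 'y set \<Rightarrow> ('x \<Rightarrow> 'y \<Rightarrow> real) \<Rightarrow> 'z set \<Rightarrow> ('x \<Rightarrow> 'z \<Rightarrow> real) \<Rightarrow> bool" where
  "ch_equiv X Y1 C1 Y2 C2 \<longleftrightarrow>
     (\<forall>\<pi> W g. is_prior X \<pi> \<longrightarrow> is_gain W X g \<longrightarrow>
        post_vuln W g X \<pi> Y1 C1 = post_vuln W g X \<pi> Y2 C2)"

end

theory Submission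
  imports Defs
begin

text \<open>The cascade with S sends a dataset x to a point y with the probability that the
  cascade with S^r gives to h(y), spread uniformly over the #h(y) datasets with that
  histogram. Merging output columns that are positive multiples of one column does not
  change any posterior vulnerability, since the maximum over actions commutes with
  nonnegative scaling; merging each class of datasets with equal histogram therefore
  turns V_g[pi |> N S] into V_g[pi |> N S^r]. Nothing about k-RR is used: the
  equivalence holds for any channel N in place of the k-RR channel.\<close>

lemma finite_datasets: "finite K \<Longrightarrow> finite (datasets K n)"
  using finite_lists_length_eq[of K n] unfolding datasets_def by (simp add: conj_commute)

lemma Max_image_mult_left:
  fixes c :: real
  assumes "c \<ge> 0" "finite W" "W \<noteq> {}"
  shows "Max ((\<lambda>w. c * f w) ` W) = c * Max (f ` W)"
proof -
  have "mono ((*) c)" using \<open>c \<ge> 0\<close> by (simp add: mono_def mult_left_mono)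
  then show ?thesis
    using mono_Max_commute[of "(*) c" "f ` W"] assms by (simp add: image_image)
qed

lemma sum_div_card_fibre:
  fixes F :: "'b \<Rightarrow> real"
  assumes "finite A"
  shows "(\<Sum>x\<in>A. F (f x) / card {y \<in> A. f y = f x}) = (\<Sum>z\<in>f ` A. F z)"
proof -
  have "(\<Sum>x\<in>A. F (f x) / card {y \<in> A. f y = f x})
      = (\<Sum>z\<in>f ` A. \<Sum>x\<in>{y \<in> A. f y = z}. F z / card {y \<in> A. f y = z})"
    by (rule trans[OF sum.image_gen[OF assms]]) (auto intro!: sum.cong)
  also have "\<dots> = (\<Sum>z\<in>f ` A. F z)"
  proof (rule sum.cong[OF refl])
    fix z assume "z \<in> f ` A"
    then have "card {y \<in> A. f y = z} > 0"
      using assms by (subst card_gt_0_iff) auto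
    then show "(\<Sum>x\<in>{y \<in> A. f y = z}. F z / card {y \<in> A. f y = z}) = F z"
      by simp
  qed
  finally show ?thesis .
qed

lemma post_vuln_merge_proportional_columns:
  assumes "finite Y" "finite W" "W \<noteq> {}"
  shows "post_vuln W g X \<pi> Y (\<lambda>x y. C x (f y) / card {y' \<in> Y. f y' = f y})
       = post_vuln W g X \<pi> (f ` Y) C"
proof -
  define V where "V z = Max ((\<lambda>w. \<Sum>x\<in>X. \<pi> x * C x z * g w x) ` W)" for z
  have "Max ((\<lambda>w. \<Sum>x\<in>X. \<pi> x * (C x z / c) * g w x) ` W) = V z / c"
    if "c \<ge> 0" for z and c :: real
    using Max_image_mult_left[of "1 / c" W "\<lambda>w. \<Sum>x\<in>X. \<pi> x * C x z * g w x"] assms that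
    by (simp add: V_def sum_divide_distrib)
  then show ?thesis
    unfolding post_vuln_def by (simp add: V_def[symmetric] sum_div_card_fibre[OF assms(1)])
qed

lemma cascade_shuffle_ch:
  "cascade (datasets K n) C (shuffle_ch K n)
     = (\<lambda>x y. cascade (datasets K n) C rshuffle_ch x (hist y) / num_hist K n (hist y))"
  unfolding cascade_def shuffle_ch_def rshuffle_ch_def
  by (auto simp: sum_divide_distrib intro!: sum.cong ext)

lemma ch_equiv_cascade_shuffle_ch:
  assumes "finite K"
  shows "ch_equiv (datasets K n)
           (datasets K n) (cascade (datasets K n) C (shuffle_ch K n))
           (hists K n) (cascade (datasets K n) C rshuffle_ch)"
  unfolding ch_equiv_def is_gain_def cascade_shuffle_ch num_hist_def hists_def
  using post_vuln_merge_proportional_columns[OF finite_datasets[OF assms]] by blast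

theorem mainTheorem3:
  fixes K :: "'a set" and n k :: nat and \<epsilon> p :: real
  assumes "n \<ge> 1" and "k \<ge> 2" and "finite K" and "card K = k" and "\<epsilon> \<ge> 0"
    and "p = exp \<epsilon> / (real k - 1 + exp \<epsilon>)"
  shows "ch_equiv (datasets K n)
           (datasets K n) (cascade (datasets K n) (krr_full n k p) (shuffle_ch K n))
           (hists K n) (cascade (datasets K n) (krr_full n k p) rshuffle_ch)"
  using ch_equiv_cascade_shuffle_ch[OF \<open>finite K\<close>] .

end
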